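(* Let $H$ be a real Hilbert space with inner product $(\cdot,\cdot)_H$, let $F:H\to\mathbb{R}$ be continuously Fréchet differentiable with gradient $\nabla F$, and for each $\Phi\in H$ let $\mathbf{L}(\Phi)=\mathbf{M}(\Phi)+\mathbf{S}(\Phi)$ with $\mathbf{M}(\Phi)$ a symmetric and $\mathbf{S}(\Phi)$ a skew-symmetric linear operator on $H$. Let $I_{n+\frac12}=[t_n,t_{n+1}]$, let $s\ge 1$, and let $\Phi^n\in H$ be given. Suppose $\Phi_h\in\mathbb{P}_s(I_{n+\frac12})\otimes H$ with $\Phi_h(t_n)=\Phi^n$ and $\mu_h\in\mathbb{P}_{s-1}(I_{n+\frac12})\otimes H$ satisfy, for all $U_h,\nu_h\in\mathbb{P}_{s-1}(I_{n+\frac12})\otimes H$, $$\int_{I_{n+\frac12}}(\dot\Phi_h,U_h)_H\,dt=\int_{I_{n+\frac12}}(\mathbf{L}(\Phi_h)\mu_h,U_h)_H\,dt,\qquad \int_{I_{n+\frac12}}(\mu_h,\nu_h)_H\,dt=\int_{I_{n+\frac12}}(\nabla F(\Phi_h),\nu_h)_H\,dt,$$ (all integrands assumed integrable). Setting $\Phi^{n+1}=\Phi_h(t_{n+1})$, one has $$F(\Phi^{n+1})-F(\Phi^n)=\int_{I_{n+\frac12}}\big(\mathbf{M}(\Phi_h)\mu_h,\mu_h\big)_H\,dt.$$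
   Context: $\mathbb{P}_s(I)$ denotes the space of real polynomials on the interval $I$ of degree at most $s$, and $\mathbb{P}_s(I)\otimes H$ the $H$-valued polynomials in $t$ of degree at most $s$. Symmetric/skew-symmetric: $(\mathbf{A}\Phi,\Psi)_H=\pm(\Phi,\mathbf{A}\Psi)_H$ for all $\Phi,\Psi$. *)

theory Defs
  imports "HOL-Analysis.Analysis"
begin

text \<open>H-valued polynomials in t of degree at most s (as functions on the reals;
  their restriction to a nondegenerate interval determines them).\<close>
definition polyH :: "nat \<Rightarrow> (real \<Rightarrow> 'a::real_vector) set" where
  "polyH s = {p. \<exists>c :: nat \<Rightarrow> 'a. \<forall>t. p t = (\<Sum>k\<le>s. (t ^ k) *\<^sub>R c k)}"

definition symmetric_op :: "('a::real_inner \<Rightarrow> 'a) \<Rightarrow> bool" where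
  "symmetric_op A \<longleftrightarrow> (\<forall>x y. inner (A x) y = inner x (A y))"

definition skew_symmetric_op :: "('a::real_inner \<Rightarrow> 'a) \<Rightarrow> bool" where
  "skew_symmetric_op A \<longleftrightarrow> (\<forall>x y. inner (A x) y = - inner x (A y))"

end

theory Submission
  imports Defs
begin

text \<open>Testing the second equation with \<open>\<nu>\<^sub>h = \<Phi>\<^sub>h'\<close>, which has degree \<open>s - 1\<close>, and the first
  with \<open>U\<^sub>h = \<mu>\<^sub>h\<close> gives
  \<open>F(\<Phi>\<^sup>n\<^sup>+\<^sup>1) - F(\<Phi>\<^sup>n) = \<integral> (\<nabla>F(\<Phi>\<^sub>h), \<Phi>\<^sub>h') = \<integral> (\<mu>\<^sub>h, \<Phi>\<^sub>h') = \<integral> (L(\<Phi>\<^sub>h)\<mu>\<^sub>h, \<mu>\<^sub>h)\<close>,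
  the first step being the chain rule and the fundamental theorem of calculus.
  The skew-symmetric part of \<open>L\<close> contributes nothing since \<open>(S x, x) = 0\<close>.
  With the Henstock-Kurzweil integral the fundamental theorem of calculus needs no continuity
  of \<open>\<nabla>F\<close>.\<close>

lemma monomial_has_vector_derivative:
  fixes c :: "'a::real_normed_vector"
  shows "((\<lambda>t. (t ^ k) *\<^sub>R c) has_vector_derivative (real k * t ^ (k - 1)) *\<^sub>R c) (at t)"
proof -
  have "((\<lambda>t. t ^ k) has_real_derivative real k * t ^ (k - 1)) (at t)"
    by (rule derivative_eq_intros refl)+ simp
  from has_vector_derivative_scaleR[OF this has_vector_derivative_const[of c]]
  show ?thesis by simp
qed

lemma polyH_has_vector_derivative:
  fixes p :: "real \<Rightarrow> 'a::real_normed_vector"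
  assumes "p \<in> polyH s"
  obtains p' where "p' \<in> polyH (s - 1)" and "\<And>t. (p has_vector_derivative p' t) (at t)"
proof -
  obtain c where p: "p = (\<lambda>t. \<Sum>k\<le>s. (t ^ k) *\<^sub>R c k)"
    using assms unfolding polyH_def by auto
  define p' where "p' = (\<lambda>t. \<Sum>k\<le>s. (real k * t ^ (k - 1)) *\<^sub>R c k)"
  have "(p has_vector_derivative p' t) (at t)" for t
    unfolding p p'_def by (intro has_vector_derivative_sum monomial_has_vector_derivative)
  moreover have "p' \<in> polyH (s - 1)"
  proof (cases s)
    case 0
    then show ?thesis unfolding polyH_def p'_def by (auto intro: exI[of _ "\<lambda>_. 0"])
  next
    case (Suc n)
    have "p' t = (\<Sum>k\<le>n. (t ^ k) *\<^sub>R (real (Suc k) *\<^sub>R c (Suc k)))" for t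
      unfolding p'_def Suc sum.atMost_Suc_shift by (simp add: algebra_simps)
    then show ?thesis unfolding polyH_def using Suc
      by (intro CollectI exI[of _ "\<lambda>k. real (Suc k) *\<^sub>R c (Suc k)"]) auto
  qed
  ultimately show thesis using that by blast
qed

lemma skew_symmetric_op_inner_self:
  assumes "skew_symmetric_op A"
  shows "inner (A x) x = 0"
  using assms unfolding skew_symmetric_op_def by (metis inner_commute add_eq_0_iff2 neg_equal_zero)

lemma has_integral_gradient_along_path:
  fixes F :: "'a::real_inner \<Rightarrow> real"
  assumes grad: "\<And>x. (F has_derivative (\<lambda>v. inner (gradF x) v)) (at x)"
    and deriv: "\<And>t. t \<in> {a..b} \<Longrightarrow> (p has_vector_derivative p' t) (at t within {a..b})"
    and "a \<le> b"
  shows "((\<lambda>t. inner (gradF (p t)) (p' t)) has_integral F (p b) - F (p a)) {a..b}"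
proof (rule fundamental_theorem_of_calculus[OF \<open>a \<le> b\<close>])
  fix t assume t: "t \<in> {a..b}"
  have "((F \<circ> p) has_derivative (\<lambda>v. inner (gradF (p t)) v) \<circ> (\<lambda>h. h *\<^sub>R p' t)) (at t within {a..b})"
    using deriv[OF t] has_derivative_at_withinI[OF grad[of "p t"]]
    unfolding has_vector_derivative_def by (rule diff_chain_within)
  then show "((\<lambda>t. F (p t)) has_vector_derivative inner (gradF (p t)) (p' t)) (at t within {a..b})"
    unfolding has_vector_derivative_def o_def by (simp add: mult.commute)
qed

theorem theorem3p2:
  fixes F :: "'a::{real_inner, complete_space} \<Rightarrow> real"
    and gradF :: "'a \<Rightarrow> 'a"
    and M S :: "'a \<Rightarrow> 'a \<Rightarrow> 'a"
    and tn tn1 :: real and s :: nat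
    and Phin :: 'a and Phih muh :: "real \<Rightarrow> 'a"
  assumes grad: "\<And>x. (F has_derivative (\<lambda>v. inner (gradF x) v)) (at x)"
    and grad_cont: "continuous_on UNIV gradF"
    and M_lin: "\<And>\<Phi>. linear (M \<Phi>)" and M_sym: "\<And>\<Phi>. symmetric_op (M \<Phi>)"
    and S_lin: "\<And>\<Phi>. linear (S \<Phi>)" and S_skew: "\<And>\<Phi>. skew_symmetric_op (S \<Phi>)"
    and interval: "tn < tn1"
    and s: "s \<ge> 1"
    and Phih_poly: "Phih \<in> polyH s"
    and Phih_init: "Phih tn = Phin"
    and muh_poly: "muh \<in> polyH (s - 1)"
    and int_L: "\<And>U. U \<in> polyH (s - 1) \<Longrightarrow>
       (\<lambda>t. inner (M (Phih t) (muh t) + S (Phih t) (muh t)) (U t)) integrable_on {tn..tn1}"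
    and int_M: "(\<lambda>t. inner (M (Phih t) (muh t)) (muh t)) integrable_on {tn..tn1}"
    and int_dPhi: "\<And>U. U \<in> polyH (s - 1) \<Longrightarrow>
       (\<lambda>t. inner (vector_derivative Phih (at t)) (U t)) integrable_on {tn..tn1}"
    and int_mu: "\<And>\<nu>. \<nu> \<in> polyH (s - 1) \<Longrightarrow>
       (\<lambda>t. inner (muh t) (\<nu> t)) integrable_on {tn..tn1}"
    and int_grad: "\<And>\<nu>. \<nu> \<in> polyH (s - 1) \<Longrightarrow>
       (\<lambda>t. inner (gradF (Phih t)) (\<nu> t)) integrable_on {tn..tn1}"
    and eq1: "\<And>U. U \<in> polyH (s - 1) \<Longrightarrow>
       integral {tn..tn1} (\<lambda>t. inner (vector_derivative Phih (at t)) (U t))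
     = integral {tn..tn1} (\<lambda>t. inner (M (Phih t) (muh t) + S (Phih t) (muh t)) (U t))"
    and eq2: "\<And>\<nu>. \<nu> \<in> polyH (s - 1) \<Longrightarrow>
       integral {tn..tn1} (\<lambda>t. inner (muh t) (\<nu> t))
     = integral {tn..tn1} (\<lambda>t. inner (gradF (Phih t)) (\<nu> t))"
  shows "F (Phih tn1) - F Phin = integral {tn..tn1} (\<lambda>t. inner (M (Phih t) (muh t)) (muh t))"
proof -
  obtain D where D_poly: "D \<in> polyH (s - 1)" and D: "\<And>t. (Phih has_vector_derivative D t) (at t)"
    using polyH_has_vector_derivative[OF Phih_poly] by blast
  have "((\<lambda>t. inner (gradF (Phih t)) (D t)) has_integral F (Phih tn1) - F Phin) {tn..tn1}"
    using has_integral_gradient_along_path[OF grad, of tn tn1 Phih D] D interval Phih_init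
    by (auto intro: has_vector_derivative_at_within)
  then have "F (Phih tn1) - F Phin = integral {tn..tn1} (\<lambda>t. inner (gradF (Phih t)) (D t))"
    by (simp add: integral_unique)
  also have "\<dots> = integral {tn..tn1} (\<lambda>t. inner (muh t) (D t))"
    using eq2[OF D_poly] by simp
  also have "\<dots> = integral {tn..tn1} (\<lambda>t. inner (vector_derivative Phih (at t)) (muh t))"
    using vector_derivative_at[OF D] by (simp add: inner_commute)
  also have "\<dots> = integral {tn..tn1} (\<lambda>t. inner (M (Phih t) (muh t) + S (Phih t) (muh t)) (muh t))"
    using eq1[OF muh_poly] .
  also have "\<dots> = integral {tn..tn1} (\<lambda>t. inner (M (Phih t) (muh t)) (muh t))"
    using skew_symmetric_op_inner_self[OF S_skew] by (simp add: inner_add_left)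
  finally show ?thesis .
qed

end
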